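(* Let $\mathcal{P}$ be a measurable space of distributions on a measurable space $\mathcal{Z}$, let $P_0$ be a distribution on $\mathcal{Z}$ and let $Z_1,\dots,Z_n\overset{\mathrm{iid}}{\sim}P_0$. Let $\epsilon>0$ and $B:=B(P_0,\epsilon)=\{P\in\mathcal{P}:\mathrm{KL}(P_0,P)\le\epsilon^2,\mathrm{V}_2(P_0,P)\le\epsilon^2\}$. For $i\in[n]$ and $P\in\mathcal{P}$ with $P\ll P_0$, let $W(P,Z_i):=\log\frac{\mathrm{d}P}{\mathrm{d}P_0}(Z_i)-\mathbb{E}\log\frac{\mathrm{d}P}{\mathrm{d}P_0}(Z_i)$. Assume there exist $a,c>0$ such that for all $P\in B$, $W(P,Z_1)$ is sub-Gamma in the left tail with variance parameter $a\epsilon^2$ and scale parameter $c$. Then for any probability measure $\Pi$ on $\mathcal{P}$ and any $D>0$, with $P_0^{\otimes n}$-probability at most $\exp\big(-\frac{D^2n\epsilon^2}{2(a+cD)}\big)$, $$\int_B\prod_{i=1}^n\frac{\mathrm{d}P}{\mathrm{d}P_0}(Z_i)\,\mathrm{d}\Pi(P)<\Pi(B)e^{-(1+D)n\epsilon^2}.$$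
   Context: $\mathrm{KL}(P,Q)=\int\log\frac{\mathrm{d}P}{\mathrm{d}Q}\,\mathrm{d}P$ and $\mathrm{V}_2(P,Q)=\int(\log\frac{\mathrm{d}P}{\mathrm{d}Q}-\mathrm{KL}(P,Q))^2\mathrm{d}P$ if $P\ll Q$, and both are $\infty$ otherwise. A zero-mean random variable $V$ is sub-Gamma in the right tail with variance parameter $s^2$ and scale $c$ if $\mathbb{E}e^{\lambda V}\le\exp(s^2\lambda^2/(2(1-c\lambda)))$ for all $\lambda\in[0,1/c)$; it is sub-Gamma in the left tail if $-V$ is sub-Gamma in the right tail. *)

theory Defs
  imports "HOL-Probability.Probability"
begin

text \<open>Kullback-Leibler divergence KL(P,Q) = int log(dP/dQ) dP if P << Q, and infinity otherwise.
  (For probability measures the negative part of the integrand is always P-integrable, so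
  non-integrability means the integral is +infinity.)  Note: in the library,
  absolutely_continuous Q P means P << Q.\<close>
definition KL_div :: "'a measure \<Rightarrow> 'a measure \<Rightarrow> ereal" where
  "KL_div P Q =
     (if absolutely_continuous Q P \<and> sets P = sets Q
         \<and> integrable P (\<lambda>x. ln (enn2real (RN_deriv Q P x)))
      then ereal (\<integral>x. ln (enn2real (RN_deriv Q P x)) \<partial>P)
      else \<infinity>)"

definition V2_div :: "'a measure \<Rightarrow> 'a measure \<Rightarrow> ereal" where
  "V2_div P Q =
     (let L = (\<lambda>x. ln (enn2real (RN_deriv Q P x))); K = (\<integral>x. L x \<partial>P) in
      if absolutely_continuous Q P \<and> sets P = sets Q \<and> integrable P L
         \<and> integrable P (\<lambda>x. (L x - K)\<^sup>2)
      then ereal (\<integral>x. (L x - K)\<^sup>2 \<partial>P)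
      else \<infinity>)"

definition sub_gamma_right :: "'a measure \<Rightarrow> ('a \<Rightarrow> real) \<Rightarrow> real \<Rightarrow> real \<Rightarrow> bool" where
  "sub_gamma_right M V s2 c \<longleftrightarrow>
     integrable M V \<and> (\<integral>x. V x \<partial>M) = 0 \<and>
     (\<forall>l. 0 \<le> l \<and> l < 1 / c \<longrightarrow>
        (\<integral>\<^sup>+x. ennreal (exp (l * V x)) \<partial>M) \<le> ennreal (exp (s2 * l\<^sup>2 / (2 * (1 - c * l)))))"

definition sub_gamma_left :: "'a measure \<Rightarrow> ('a \<Rightarrow> real) \<Rightarrow> real \<Rightarrow> real \<Rightarrow> bool" where
  "sub_gamma_left M V s2 c \<longleftrightarrow> sub_gamma_right M (\<lambda>x. - V x) s2 c"

end

theory Submission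
  imports Defs
begin

text \<open>Let \<mu> be \<Pi> conditioned on B and g(\<omega>, P) = \<Prod>i<n. p P (\<omega> i). On the event in question
  \<integral> g(\<omega>, \<cdot>) d\<mu> < t = exp (-(1 + D) n \<epsilon>^2), so Jensen's inequality for the convex map
  x \<mapsto> x powr -l gives \<integral> g(\<omega>, \<cdot>) powr -l d\<mu> \<ge> t powr -l. By Markov's inequality and Fubini's
  theorem the event has probability at most t powr l \<integral> (\<integral> p P powr -l dP0)^n d\<mu>(P). For P \<in> B,
  writing m = \<integral> ln (p P) dP0, so that KL(P0, P) = -m \<le> \<epsilon>^2, the left-tail sub-Gamma bound gives
  \<integral> p P powr -l dP0 = exp (-l m) \<integral> exp (-l W(P, z)) dP0(z) \<le> exp (l \<epsilon>^2 + a \<epsilon>^2 l^2 / (2 (1 - c l))).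
  The choice l = D / (a + c D) turns the bound into exp (-D^2 n \<epsilon>^2 / (2 (a + c D))).\<close>

lemma convex_on_powr_neg:
  assumes "0 < l"
  shows "convex_on {0<..} (\<lambda>x::real. x powr - l)"
proof (rule f''_ge0_imp_convex[where f' = "\<lambda>x. - l * x powr (- l - 1)"
      and f'' = "\<lambda>x. l * (l + 1) * x powr (- l - 2)"])
  fix x :: real assume x: "x \<in> {0<..}"
  show "((\<lambda>x. x powr - l) has_real_derivative - l * x powr (- l - 1)) (at x)"
    using x by (auto intro!: derivative_eq_intros)
  show "((\<lambda>x. - l * x powr (- l - 1)) has_real_derivative l * (l + 1) * x powr (- l - 2)) (at x)"
    using x by (auto intro!: derivative_eq_intros simp: algebra_simps)
  show "0 \<le> l * (l + 1) * x powr (- l - 2)"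
    using assms by simp
qed simp

text \<open>x powr -l, extended to x = 0 by its limit \<infinity>: this keeps Jensen's inequality valid when
  the integrand vanishes on a set of positive measure.\<close>
definition inv_powr :: "real \<Rightarrow> real \<Rightarrow> ennreal" where
  "inv_powr l x = (if x = 0 then \<infinity> else ennreal (x powr - l))"

lemma measurable_inv_powr[measurable (raw)]:
  assumes [measurable]: "f \<in> borel_measurable M"
  shows "(\<lambda>x. inv_powr l (f x)) \<in> borel_measurable M"
  unfolding inv_powr_def by measurable

lemma inv_powr_prod: "inv_powr l (\<Prod>i\<in>I. f i) = (\<Prod>i\<in>I. inv_powr l (f i))"
proof (cases "finite I \<and> (\<exists>i\<in>I. f i = 0)")
  case True
  then have "(\<Prod>i\<in>I. inv_powr l (f i)) = \<top>"
    by (subst ennreal_prod_eq_top) (auto simp: inv_powr_def)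
  with True show ?thesis
    by (auto simp: inv_powr_def)
next
  case False
  then have "(\<Prod>i\<in>I. f i) \<noteq> 0"
    by (cases "finite I") auto
  with False show ?thesis
    by (auto simp: inv_powr_def prod_powr_distrib prod_ennreal)
qed

lemma (in prob_space) nn_integral_inv_powr_ge:
  assumes g[measurable]: "g \<in> borel_measurable M" and g_nonneg: "AE x in M. 0 \<le> g x"
    and l: "0 < l" and less: "(\<integral>\<^sup>+x. ennreal (g x) \<partial>M) < ennreal t"
  shows "ennreal (t powr - l) \<le> (\<integral>\<^sup>+x. inv_powr l (g x) \<partial>M)"
proof (cases "(\<integral>\<^sup>+x. inv_powr l (g x) \<partial>M) = \<infinity>")
  case False
  then have "AE x in M. inv_powr l (g x) \<noteq> \<infinity>"
    by (intro nn_integral_PInf_AE) auto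
  with g_nonneg have g_pos: "AE x in M. 0 < g x"
    by eventually_elim (auto simp: inv_powr_def less_le)
  then have eq: "(\<integral>\<^sup>+x. inv_powr l (g x) \<partial>M) = (\<integral>\<^sup>+x. ennreal (g x powr - l) \<partial>M)"
    by (intro nn_integral_cong_AE) (auto elim!: eventually_mono simp: inv_powr_def)
  have int_powr: "integrable M (\<lambda>x. g x powr - l)"
    using False eq by (intro integrableI_nonneg) (auto simp: top.not_eq_extremum)
  have int_g: "integrable M g"
    using less g_nonneg by (intro integrableI_nonneg) (auto intro: order.strict_trans)
  have "(\<integral>\<^sup>+x. ennreal (g x) \<partial>M) = ennreal (expectation g)"
    using int_g g_nonneg by (rule nn_integral_eq_integral)
  with less have "expectation g < t"
    using g_nonneg by (simp add: ennreal_less_iff integral_nonneg_AE)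
  moreover have "0 < expectation g"
  proof -
    have "\<not> (AE x in M. g x = 0)"
    proof
      assume "AE x in M. g x = 0"
      with g_pos have "AE x in M. False"
        by eventually_elim auto
      then show False
        by simp
    qed
    then show ?thesis
      using int_g g_nonneg integral_nonneg_eq_0_iff_AE integral_nonneg_AE less_eq_real_def
      by metis
  qed
  ultimately have "t powr - l \<le> expectation g powr - l"
    using l by (intro powr_mono2') auto
  also have "\<dots> \<le> expectation (\<lambda>x. g x powr - l)"
    using int_g int_powr g_pos convex_on_powr_neg[OF l]
    by (intro jensens_inequality[where I = "{0<..}"]) auto
  finally show ?thesis
    using int_powr eq by (simp add: nn_integral_eq_integral ennreal_leI)
qed simp

lemma AE_density_nonzero:
  assumes f[measurable]: "f \<in> borel_measurable M"
    and ac: "absolutely_continuous (density M f) M"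
  shows "AE x in M. f x \<noteq> 0"
proof (rule AE_I')
  let ?S = "{x \<in> space M. f x = 0}"
  have "emeasure (density M f) ?S = (\<integral>\<^sup>+x\<in>?S. f x \<partial>M)"
    by (simp add: emeasure_density)
  also have "\<dots> = 0"
    by (rule nn_integral_zero') (auto split: split_indicator)
  finally have "?S \<in> null_sets (density M f)"
    by auto
  with ac show "?S \<in> null_sets M"
    unfolding absolutely_continuous_def by auto
qed auto

lemma RN_deriv_density_inverse:
  fixes f :: "'a \<Rightarrow> real"
  assumes f[measurable]: "f \<in> borel_measurable M" and f_pos: "AE x in M. 0 < f x"
    and "sigma_finite_measure (density M f)"
  shows "AE x in M. RN_deriv (density M f) M x = ennreal (1 / f x)"
proof -
  interpret N: sigma_finite_measure "density M f" by fact
  have "density (density M f) (\<lambda>x. ennreal (1 / f x)) = density M (\<lambda>_. 1)"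
    using f_pos by (subst density_density_eq)
      (auto intro!: density_cong elim!: eventually_mono simp: ennreal_mult'[symmetric])
  then have inv: "density (density M f) (\<lambda>x. ennreal (1 / f x)) = M"
    by (simp add: density_1)
  then have "AE x in density M f. ennreal (1 / f x) = RN_deriv (density M f) M x"
    by (intro N.RN_deriv_unique) auto
  with f_pos show ?thesis
    by (simp add: AE_density) (auto elim: eventually_mono)
qed

lemma KL_div_density:
  fixes p :: "'a \<Rightarrow> real"
  assumes P: "P = density P0 p" "sigma_finite_measure P"
    and p[measurable]: "p \<in> borel_measurable P0" and p_pos: "AE z in P0. 0 < p z"
    and finite: "KL_div P0 P < \<infinity>"
  shows "KL_div P0 P = ereal (- (\<integral>z. ln (p z) \<partial>P0))"
proof -
  have "AE z in P0. RN_deriv P P0 z = ennreal (1 / p z)"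
    using RN_deriv_density_inverse[OF p p_pos] P by simp
  with p_pos have "AE z in P0. ln (enn2real (RN_deriv P P0 z)) = - ln (p z)"
    by eventually_elim (simp add: ln_div)
  then have "(\<integral>z. ln (enn2real (RN_deriv P P0 z)) \<partial>P0) = (\<integral>z. - ln (p z) \<partial>P0)"
    using P by (intro integral_cong_AE) auto
  with finite show ?thesis
    unfolding KL_div_def by (auto split: if_splits)
qed

lemma nn_integral_inv_powr_density_le:
  fixes p :: "'a \<Rightarrow> real"
  assumes P0: "prob_space P0" and P: "P = density P0 p" "prob_space P"
    and p[measurable]: "p \<in> borel_measurable P0"
    and KL: "KL_div P0 P \<le> ereal e"
    and sub_gamma: "sub_gamma_left P0 (\<lambda>z. ln (p z) - (\<integral>x. ln (p x) \<partial>P0)) s2 c"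
    and l: "0 \<le> l" "l < 1 / c"
  shows "(\<integral>\<^sup>+z. inv_powr l (p z) \<partial>P0) \<le> ennreal (exp (l * e + s2 * l\<^sup>2 / (2 * (1 - c * l))))"
proof -
  interpret P0: prob_space P0 by fact
  define m where "m = (\<integral>z. ln (p z) \<partial>P0)"
  have "absolutely_continuous P P0"
    using KL unfolding KL_div_def by (auto split: if_splits)
  then have "AE z in P0. ennreal (p z) \<noteq> 0"
    using P by (intro AE_density_nonzero) auto
  then have p_pos: "AE z in P0. 0 < p z"
    by eventually_elim (simp add: ennreal_eq_0_iff not_le)
  have "KL_div P0 P = ereal (- m)"
    unfolding m_def using KL P p_pos prob_space_imp_sigma_finite
    by (intro KL_div_density) auto
  with KL have m: "- e \<le> m"
    by simp
  have mgf: "(\<integral>\<^sup>+z. ennreal (exp (l * - (ln (p z) - m))) \<partial>P0)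
      \<le> ennreal (exp (s2 * l\<^sup>2 / (2 * (1 - c * l))))"
    using sub_gamma l unfolding sub_gamma_left_def sub_gamma_right_def m_def by blast
  have "(\<integral>\<^sup>+z. inv_powr l (p z) \<partial>P0)
      = (\<integral>\<^sup>+z. ennreal (exp (- l * m)) * ennreal (exp (l * - (ln (p z) - m))) \<partial>P0)"
    using p_pos
    by (intro nn_integral_cong_AE, eventually_elim)
      (simp add: inv_powr_def powr_def ennreal_mult'[symmetric] exp_add[symmetric] algebra_simps)
  also have "\<dots> = ennreal (exp (- l * m)) * (\<integral>\<^sup>+z. ennreal (exp (l * - (ln (p z) - m))) \<partial>P0)"
    by (rule nn_integral_cmult) measurable
  also have "\<dots> \<le> ennreal (exp (l * e)) * ennreal (exp (s2 * l\<^sup>2 / (2 * (1 - c * l))))"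
    using mult_left_mono[OF m l(1)] by (intro mult_mono mgf ennreal_leI) auto
  also have "\<dots> = ennreal (exp (l * e + s2 * l\<^sup>2 / (2 * (1 - c * l))))"
    by (simp add: ennreal_mult'[symmetric] exp_add)
  finally show ?thesis .
qed

lemma nn_integral_PiM_inv_powr_prod:
  assumes "sigma_finite_measure M" "finite I" and f[measurable]: "f \<in> borel_measurable M"
  shows "(\<integral>\<^sup>+\<omega>. inv_powr l (\<Prod>i\<in>I. f (\<omega> i)) \<partial>PiM I (\<lambda>_. M))
    = (\<integral>\<^sup>+z. inv_powr l (f z) \<partial>M) ^ card I"
proof -
  interpret product_sigma_finite "\<lambda>_. M"
    using assms(1) by (simp add: product_sigma_finite_def)
  have "(\<integral>\<^sup>+\<omega>. inv_powr l (\<Prod>i\<in>I. f (\<omega> i)) \<partial>PiM I (\<lambda>_. M))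
      = (\<integral>\<^sup>+\<omega>. (\<Prod>i\<in>I. inv_powr l (f (\<omega> i))) \<partial>PiM I (\<lambda>_. M))"
    by (simp add: inv_powr_prod)
  also have "\<dots> = (\<Prod>i\<in>I. \<integral>\<^sup>+z. inv_powr l (f z) \<partial>M)"
    using \<open>finite I\<close> by (intro product_nn_integral_prod) auto
  finally show ?thesis
    by simp
qed

lemma emeasure_mixture_less_le:
  fixes g :: "'a \<Rightarrow> 'b \<Rightarrow> real"
  assumes "prob_space M" "sigma_finite_measure Q"
    and g[measurable]: "(\<lambda>(\<omega>, x). g \<omega> x) \<in> borel_measurable (Q \<Otimes>\<^sub>M M)"
    and g_nonneg: "\<And>\<omega> x. \<omega> \<in> space Q \<Longrightarrow> x \<in> space M \<Longrightarrow> 0 \<le> g \<omega> x"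
    and l: "0 < l" and bound: "AE x in M. (\<integral>\<^sup>+\<omega>. inv_powr l (g \<omega> x) \<partial>Q) \<le> K"
  shows "emeasure Q {\<omega> \<in> space Q. (\<integral>\<^sup>+x. ennreal (g \<omega> x) \<partial>M) < ennreal t}
    \<le> ennreal (t powr l) * K"
proof -
  interpret M: prob_space M by fact
  interpret pair_sigma_finite Q M
    using assms(1,2) by (simp add: pair_sigma_finite_def prob_space_imp_sigma_finite)
  define Y where "Y \<omega> = (\<integral>\<^sup>+x. inv_powr l (g \<omega> x) \<partial>M)" for \<omega>
  have Y[measurable]: "Y \<in> borel_measurable Q"
    unfolding Y_def by measurable
  have "{\<omega> \<in> space Q. (\<integral>\<^sup>+x. ennreal (g \<omega> x) \<partial>M) < ennreal t}
      \<subseteq> {\<omega> \<in> space Q. 1 \<le> ennreal (t powr l) * Y \<omega>}"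
  proof safe
    fix \<omega> assume \<omega>: "\<omega> \<in> space Q" and less: "(\<integral>\<^sup>+x. ennreal (g \<omega> x) \<partial>M) < ennreal t"
    then have "0 < t"
      using le_less_trans[OF zero_le less] by simp
    have "ennreal (t powr - l) \<le> Y \<omega>"
      unfolding Y_def using \<omega> g_nonneg l less by (intro M.nn_integral_inv_powr_ge) auto
    then have "ennreal (t powr l) * ennreal (t powr - l) \<le> ennreal (t powr l) * Y \<omega>"
      by (rule mult_left_mono) simp
    then show "1 \<le> ennreal (t powr l) * Y \<omega>"
      using \<open>0 < t\<close> by (simp add: ennreal_mult'[symmetric] powr_add[symmetric])
  qed
  then have "emeasure Q {\<omega> \<in> space Q. (\<integral>\<^sup>+x. ennreal (g \<omega> x) \<partial>M) < ennreal t}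
      \<le> emeasure Q {\<omega> \<in> space Q. 1 \<le> ennreal (t powr l) * Y \<omega>}"
    by (intro emeasure_mono) auto
  also have "\<dots> \<le> ennreal (t powr l) * (\<integral>\<^sup>+\<omega>. Y \<omega> * indicator (space Q) \<omega> \<partial>Q)"
    by (intro nn_integral_Markov_inequality) auto
  also have "(\<integral>\<^sup>+\<omega>. Y \<omega> * indicator (space Q) \<omega> \<partial>Q) = (\<integral>\<^sup>+\<omega>. Y \<omega> \<partial>Q)"
    by (intro nn_integral_cong) simp
  also have "\<dots> = (\<integral>\<^sup>+x. (\<integral>\<^sup>+\<omega>. inv_powr l (g \<omega> x) \<partial>Q) \<partial>M)"
    unfolding Y_def by (rule Fubini'[symmetric]) measurable
  also have "\<dots> \<le> (\<integral>\<^sup>+x. K \<partial>M)"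
    using bound by (rule nn_integral_mono_AE)
  also have "\<dots> = K"
    by (simp add: M.emeasure_space_1)
  finally show ?thesis
    by (simp add: mult_left_mono)
qed

lemma nn_integral_uniform_measure_less_iff:
  assumes "S \<in> sets M" "emeasure M S \<noteq> 0" "emeasure M S \<noteq> \<infinity>"
    and "f \<in> borel_measurable M"
  shows "(\<integral>\<^sup>+x. f x \<partial>uniform_measure M S) < t \<longleftrightarrow> (\<integral>\<^sup>+x\<in>S. f x \<partial>M) < emeasure M S * t"
  using assms by (simp add: nn_integral_uniform_measure divide_less_ennreal less_top mult.commute)

lemma emeasure_set_mixture_less_le:
  fixes g :: "'a \<Rightarrow> 'b \<Rightarrow> real"
  assumes "finite_measure M" "sigma_finite_measure Q" and S: "S \<in> sets M"
    and g[measurable]: "(\<lambda>(\<omega>, x). g \<omega> x) \<in> borel_measurable (Q \<Otimes>\<^sub>M M)"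
    and g_nonneg: "\<And>\<omega> x. \<omega> \<in> space Q \<Longrightarrow> x \<in> space M \<Longrightarrow> 0 \<le> g \<omega> x"
    and l: "0 < l" and bound: "\<And>x. x \<in> S \<Longrightarrow> (\<integral>\<^sup>+\<omega>. inv_powr l (g \<omega> x) \<partial>Q) \<le> K"
  shows "emeasure Q {\<omega> \<in> space Q. (\<integral>\<^sup>+x\<in>S. ennreal (g \<omega> x) \<partial>M) < emeasure M S * ennreal t}
    \<le> ennreal (t powr l) * K"
proof (cases "emeasure M S = 0")
  case False
  interpret finite_measure M by fact
  have "{\<omega> \<in> space Q. (\<integral>\<^sup>+x\<in>S. ennreal (g \<omega> x) \<partial>M) < emeasure M S * ennreal t}
      = {\<omega> \<in> space Q. (\<integral>\<^sup>+x. ennreal (g \<omega> x) \<partial>uniform_measure M S) < ennreal t}"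
    using False S measurable_Pair2[OF g]
    by (intro Collect_cong conj_cong refl nn_integral_uniform_measure_less_iff[symmetric]) auto
  also have "emeasure Q \<dots> \<le> ennreal (t powr l) * K"
    using False S assms(2) g_nonneg l bound
    by (intro emeasure_mixture_less_le prob_space_uniform_measure AE_uniform_measureI)
      (auto simp: measurable_cong_sets[OF sets_pair_measure_cong[OF refl sets_uniform_measure]])
  finally show ?thesis .
qed simp

lemma sub_gamma_chernoff_bound:
  fixes a c D e :: real and n :: nat
  assumes "0 < a" "0 < c" "0 < D"
  defines "l \<equiv> D / (a + c * D)"
  shows "exp (- (1 + D) * n * e) powr l * exp (l * e + a * e * l\<^sup>2 / (2 * (1 - c * l))) ^ n
    = exp (- (D\<^sup>2 * n * e) / (2 * (a + c * D)))"
proof -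
  have "0 < a + c * D"
    using assms by (simp add: add_pos_pos)
  have "1 - c * l = a / (a + c * D)"
    using \<open>0 < a + c * D\<close> unfolding l_def by (simp add: field_simps)
  moreover have "- D * (D / s) * e + a * e * (D / s)\<^sup>2 / (2 * (a / s)) = - (D\<^sup>2 * e) / (2 * s)"
    if "0 < s" for s
    using that \<open>0 < a\<close> by (simp add: field_simps power2_eq_square)
  ultimately have "- D * l * e + a * e * l\<^sup>2 / (2 * (1 - c * l)) = - (D\<^sup>2 * e) / (2 * (a + c * D))"
    using \<open>0 < a + c * D\<close> unfolding l_def by simp
  moreover have "exp (- (1 + D) * n * e) powr l * exp (l * e + a * e * l\<^sup>2 / (2 * (1 - c * l))) ^ n
      = exp (n * (- D * l * e + a * e * l\<^sup>2 / (2 * (1 - c * l))))"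
    by (simp add: powr_def exp_of_nat_mult[symmetric] exp_add[symmetric] algebra_simps)
  ultimately show ?thesis
    by simp
qed

theorem lemma13:
  fixes P0 :: "'z measure" and Pr :: "'z measure measure"
    and p :: "'z measure \<Rightarrow> 'z \<Rightarrow> real"
    and B :: "'z measure set"
    and n :: nat and \<epsilon> a c D :: real
  assumes P0: "prob_space P0"
    and Pi: "prob_space Pr"
    and space_Pi: "\<forall>P\<in>space Pr. prob_space P \<and> sets P = sets P0"
    and p_meas: "(\<lambda>(P, z). p P z) \<in> borel_measurable (Pr \<Otimes>\<^sub>M P0)"
    and p_nonneg: "\<forall>P\<in>space Pr. \<forall>z\<in>space P0. 0 \<le> p P z"
    and p_RN: "\<forall>P\<in>space Pr. absolutely_continuous P0 P \<longrightarrow> P = density P0 (\<lambda>z. ennreal (p P z))"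
    and eps: "\<epsilon> > 0" and a: "a > 0" and c: "c > 0" and D: "D > 0"
    and B_def: "B = {P \<in> space Pr. KL_div P0 P \<le> ereal (\<epsilon>\<^sup>2) \<and> V2_div P0 P \<le> ereal (\<epsilon>\<^sup>2)}"
    and B_meas: "B \<in> sets Pr"
    and subgamma: "\<forall>P\<in>B. absolutely_continuous P0 P \<and>
        sub_gamma_left P0 (\<lambda>z. ln (p P z) - (\<integral>x. ln (p P x) \<partial>P0)) (a * \<epsilon>\<^sup>2) c"
  shows "emeasure (PiM {..<n} (\<lambda>_. P0))
           {\<omega> \<in> space (PiM {..<n} (\<lambda>_. P0)).
              (\<integral>\<^sup>+P\<in>B. (\<Prod>i<n. ennreal (p P (\<omega> i))) \<partial>Pr)
                < emeasure Pr B * ennreal (exp (- (1 + D) * real n * \<epsilon>\<^sup>2))}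
         \<le> ennreal (exp (- (D\<^sup>2 * real n * \<epsilon>\<^sup>2) / (2 * (a + c * D))))"
proof -
  define Q where "Q = PiM {..<n} (\<lambda>_. P0)"
  have Q: "prob_space Q"
    unfolding Q_def using P0 by (rule prob_space_PiM)
  define t where "t = exp (- (1 + D) * real n * \<epsilon>\<^sup>2)"
  define l where "l = D / (a + c * D)"
  define K where "K = exp (l * \<epsilon>\<^sup>2 + a * \<epsilon>\<^sup>2 * l\<^sup>2 / (2 * (1 - c * l)))"
  have "0 < a + c * D"
    using a c D by (simp add: add_pos_pos)
  then have l: "0 < l" "l < 1 / c"
    unfolding l_def using a c D by (simp_all add: field_simps)
  have [measurable (raw)]: "(\<lambda>x. p (f x) (g x)) \<in> borel_measurable N"
    if "f \<in> measurable N Pr" "g \<in> measurable N P0" for f g and N :: "'b measure"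
    using measurable_compose[OF measurable_Pair[OF that] p_meas] by simp
  have prod_nonneg: "0 \<le> (\<Prod>i<n. p P (\<omega> i))" if "\<omega> \<in> space Q" "P \<in> space Pr" for \<omega> P
    using p_nonneg that by (auto simp: Q_def space_PiM intro!: prod_nonneg)
  have Q_bound: "(\<integral>\<^sup>+\<omega>. inv_powr l (\<Prod>i<n. p P (\<omega> i)) \<partial>Q) \<le> ennreal K ^ n" if "P \<in> B" for P
  proof -
    have P: "P \<in> space Pr" "KL_div P0 P \<le> ereal (\<epsilon>\<^sup>2)"
      using that B_def by auto
    have "(\<integral>\<^sup>+z. inv_powr l (p P z) \<partial>P0) \<le> ennreal K"
      unfolding K_def using P space_Pi p_RN subgamma that l
      by (intro nn_integral_inv_powr_density_le[OF P0]) auto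
    then show ?thesis
      using P(1) prob_space_imp_sigma_finite[OF P0]
      by (simp add: Q_def nn_integral_PiM_inv_powr_prod power_mono)
  qed
  have "{\<omega> \<in> space Q. (\<integral>\<^sup>+P\<in>B. (\<Prod>i<n. ennreal (p P (\<omega> i))) \<partial>Pr) < emeasure Pr B * ennreal t}
      = {\<omega> \<in> space Q. (\<integral>\<^sup>+P\<in>B. ennreal (\<Prod>i<n. p P (\<omega> i)) \<partial>Pr) < emeasure Pr B * ennreal t}"
    using p_nonneg
    by (intro Collect_cong conj_cong refl arg_cong2[where f = less] nn_integral_cong, subst prod_ennreal)
      (auto simp: Q_def space_PiM PiE_iff)
  also have "emeasure Q \<dots> \<le> ennreal (t powr l) * ennreal K ^ n"
    using Pi Q B_meas prod_nonneg l Q_bound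
    by (intro emeasure_set_mixture_less_le prob_space_imp_sigma_finite prob_space.finite_measure)
      (auto simp: Q_def)
  also have "\<dots> = ennreal (t powr l * K ^ n)"
    by (simp add: ennreal_mult ennreal_power K_def)
  also have "t powr l * K ^ n = exp (- (D\<^sup>2 * real n * \<epsilon>\<^sup>2) / (2 * (a + c * D)))"
    unfolding t_def K_def l_def by (rule sub_gamma_chernoff_bound[OF a c D])
  finally show ?thesis
    unfolding Q_def t_def .
qed

end
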